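(* Suppose Assumptions (A3) and (A6) hold. Let $\alpha_0\in(0,\alpha]$ and $c_2\in(0,\infty)$ be such that $\int e^{\alpha_1D_1(z)}\theta(dz)\le e^{c_2\alpha_1}$ for all $\alpha_1\in[0,\alpha_0]$. Let $\gamma_0\in(0,a_0)$ and $\delta\in\big[0,\min\{a_0-\gamma_0,\frac{1-e^{-\omega}}{2M}\}\big)$. Then for all $\alpha_1\in[0,\alpha_0]$, $$\sup_{n\ge0}\sup_{N\ge1}E\,e^{\alpha_1|X_n^{1,N}|}<\infty .$$
   Context: Setting. Fix integers $d,m\ge1$, a real $d\times d$ matrix $A$ with operator norm $\|A\|$, $\delta\ge0$, a Borel probability measure $\theta$ on $\mathbb{R}^m$, and a measurable $f:\mathbb{R}^d\times\mathcal{P}_1(\mathbb{R}^d)\times\mathbb{R}^m\to\mathbb{R}^d$. $\mathcal{P}_1(\mathbb{R}^d)$: Borel probability measures on $\mathbb{R}^d$ with finite first moment, with the Wasserstein-1 distance $\mathcal{W}_1(\mu,\nu)=\inf E|X-Y|$ over couplings. Particle system: for each $N\ge1$, $\{X_0^{i,N}\}_{i=1}^N$ are exchangeable, each with law $\mu_0\in\mathcal{P}_1(\mathbb{R}^d)$; $\{\epsilon_n^i\}_{i,n\ge1}$ i.i.d. with law $\theta$, independent of the initial conditions; $X_{n+1}^{i,N}=AX_n^{i,N}+\delta f(X_n^{i,N},\mu_n^N,\epsilon_{n+1}^i)$, $\mu_n^N=\frac1N\sum_{i=1}^N\delta_{X_n^{i,N}}$. $D(z):=\sup\frac{|f(x_1,\mu_1,z)-f(x_2,\mu_2,z)|}{|x_1-x_2|+\mathcal{W}_1(\mu_1,\mu_2)}$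 (supremum over $(x_1,\mu_1)\neq(x_2,\mu_2)$), $D_1(z):=|f(0,\delta_0,z)|$, $\sigma:=\int D\,d\theta$, $a_0:=\frac{1-e^{-\omega}}{2\sigma}$. (A3): $\|A\|\le e^{-\omega}$ for some $\omega>0$. (A6): (i) for some $M\in(1,\infty)$, $D(z)\le M$ for $\theta$-a.e. $z$; (ii) there is $\alpha>0$ with $\int e^{\alpha|x|}\mu_0(dx)<\infty$ and $\int e^{\alpha D_1(z)}\theta(dz)<\infty$. *)

theory Defs
  imports "HOL-Probability.Probability" "HOL-Combinatorics.Permutations"
begin

definition P1 :: "(real^'d) measure set" where
  "P1 = {\<mu>. prob_space \<mu> \<and> sets \<mu> = sets borel \<and> integrable \<mu> (\<lambda>x. norm x)}"

definition couplings :: "(real^'d) measure \<Rightarrow> (real^'d) measure \<Rightarrow> ((real^'d) \<times> (real^'d)) measure set" where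
  "couplings \<mu> \<nu> = {\<pi>. prob_space \<pi> \<and> sets \<pi> = sets (borel \<Otimes>\<^sub>M borel)
      \<and> distr \<pi> borel fst = \<mu> \<and> distr \<pi> borel snd = \<nu>}"

definition W1 :: "(real^'d) measure \<Rightarrow> (real^'d) measure \<Rightarrow> real" where
  "W1 \<mu> \<nu> = enn2real (INF \<pi>\<in>couplings \<mu> \<nu>. \<integral>\<^sup>+ p. ennreal (dist (fst p) (snd p)) \<partial>\<pi>)"

definition Dlip :: "(real^'d \<Rightarrow> (real^'d) measure \<Rightarrow> 'z \<Rightarrow> real^'d) \<Rightarrow> 'z \<Rightarrow> ennreal" where
  "Dlip f z = (SUP p \<in> {((x1,\<mu>1),(x2,\<mu>2)). \<mu>1 \<in> P1 \<and> \<mu>2 \<in> P1 \<and> (x1,\<mu>1) \<noteq> (x2,\<mu>2)}.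
      ennreal (norm (f (fst (fst p)) (snd (fst p)) z - f (fst (snd p)) (snd (snd p)) z)
               / (dist (fst (fst p)) (fst (snd p)) + W1 (snd (fst p)) (snd (snd p)))))"

definition D1 :: "(real^'d \<Rightarrow> (real^'d) measure \<Rightarrow> 'z \<Rightarrow> real^'d) \<Rightarrow> 'z \<Rightarrow> real" where
  "D1 f z = norm (f 0 (return borel 0) z)"

definition sigma :: "(real^'d \<Rightarrow> (real^'d) measure \<Rightarrow> 'z \<Rightarrow> real^'d) \<Rightarrow> 'z measure \<Rightarrow> ennreal" where
  "sigma f \<theta> = (\<integral>\<^sup>+ z. Dlip f z \<partial>\<theta>)"

definition a0 :: "real \<Rightarrow> (real^'d \<Rightarrow> (real^'d) measure \<Rightarrow> 'z \<Rightarrow> real^'d) \<Rightarrow> 'z measure \<Rightarrow> ereal" where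
  "a0 \<omega> f \<theta> = (if sigma f \<theta> = 0 then \<infinity>
                 else ereal ((1 - exp (-\<omega>)) / (2 * enn2real (sigma f \<theta>))))"

text \<open>Empirical measure (1/N) sum_{i=1}^N delta_{x_i}.\<close>
definition empirical :: "nat \<Rightarrow> (nat \<Rightarrow> real^'d) \<Rightarrow> (real^'d) measure" where
  "empirical N xs = distr (uniform_count_measure {1..N}) borel xs"

primrec particle ::
  "real^'d^'d \<Rightarrow> real \<Rightarrow> (real^'d \<Rightarrow> (real^'d) measure \<Rightarrow> 'z \<Rightarrow> real^'d)
   \<Rightarrow> (nat \<Rightarrow> nat \<Rightarrow> 'a \<Rightarrow> real^'d) \<Rightarrow> (nat \<Rightarrow> nat \<Rightarrow> 'a \<Rightarrow> 'z)
   \<Rightarrow> nat \<Rightarrow> nat \<Rightarrow> nat \<Rightarrow> 'a \<Rightarrow> real^'d" where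
  "particle A \<delta> f X0 eps N 0 i \<omega> = X0 N i \<omega>"
| "particle A \<delta> f X0 eps N (Suc n) i \<omega> =
     A *v particle A \<delta> f X0 eps N n i \<omega>
     + \<delta> *\<^sub>R f (particle A \<delta> f X0 eps N n i \<omega>)
                (empirical N (\<lambda>j. particle A \<delta> f X0 eps N n j \<omega>)) (eps i (Suc n) \<omega>)"

end

theory Submission
  imports Defs
begin

(* Fix a rate beta in [0, alpha0].  Writing kappa = exp (-omega) and
   rho = kappa + 2 delta Mc < 1, the recursion, the operator norm bound on A and the
   Lipschitz bound on f (through W1 (mu_N, delta_0) = mean norm) give, pathwise,
     |X_{n+1}^i| <= (kappa + delta Mc) |X_n^i| + delta Mc avg_j |X_n^j| + delta D1(eps_{n+1}^i).
   Convexity of exp (Jensen for the empirical average), together with the absorption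
   inequality exp (rho t) <= exp t / (2 C) + K valid because rho < 1, turns this into
     exp (beta |X_{n+1}^i|) <= u_n * exp (beta delta D1(eps_{n+1}^i)),
   where u_n is an affine combination of the exp (beta |X_n^j|) with total weight
   1 / (2 C).  Since u_n is measurable with respect to the initial data and the noise up
   to time n, it is independent of eps_{n+1}^i, so the expectation factorises and
   E exp (beta |X_{n+1}^i|) <= (B / (2 C) + K) C <= B for B = max B0 (2 C K), where B0
   bounds the initial exponential moment and C = exp (c2 beta delta) the noise one.
   Induction on n gives a bound uniform in n and N. *)

section \<open>Empirical measures\<close>

lemma measurable_from_uniform_count_measure:
  "xs \<in> measurable (uniform_count_measure {1..N}) (borel :: (real^'d) measure)"
  by (simp add: measurable_cong_sets[OF sets_uniform_count_measure_count_space refl])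

lemma prob_space_empirical: "N \<ge> 1 \<Longrightarrow> prob_space (empirical N (xs :: nat \<Rightarrow> real^'d))"
  unfolding empirical_def
  by (intro prob_space.prob_space_distr prob_space_uniform_count_measure
        measurable_from_uniform_count_measure) auto

lemma sets_empirical[simp]: "sets (empirical N xs) = sets borel"
  unfolding empirical_def by simp

lemma nn_integral_empirical:
  assumes "g \<in> borel_measurable (borel :: (real^'d) measure)"
  shows "(\<integral>\<^sup>+ x. g x \<partial>empirical N (xs :: nat \<Rightarrow> real^'d))
       = (\<Sum>j\<in>{1..N}. ennreal (1 / real N) * g (xs j))"
proof -
  have "(\<integral>\<^sup>+ x. g x \<partial>empirical N xs) = (\<integral>\<^sup>+ j. g (xs j) \<partial>uniform_count_measure {1..N})"
    unfolding empirical_def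
    by (rule nn_integral_distr[OF measurable_from_uniform_count_measure])
      (simp add: measurable_cong_sets[OF sets_distr refl] assms)
  also have "\<dots> = (\<Sum>j\<in>{1..N}. ennreal (1 / real N) * g (xs j))"
    unfolding uniform_count_measure_def
    by (subst nn_integral_point_measure_finite) auto
  finally show ?thesis .
qed

lemma empirical_in_P1: "N \<ge> 1 \<Longrightarrow> empirical N (xs :: nat \<Rightarrow> real^'d) \<in> P1"
proof -
  assume N: "N \<ge> 1"
  have "(\<integral>\<^sup>+ x. ennreal (norm x) \<partial>empirical N xs)
      = (\<Sum>j\<in>{1..N}. ennreal (1 / real N) * ennreal (norm (xs j)))"
    by (rule nn_integral_empirical) simp
  also have "\<dots> < \<infinity>" by (simp add: ennreal_mult_less_top)
  finally have "integrable (empirical N xs) (\<lambda>x. norm x)"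
    by (intro integrableI_bounded) (auto simp: measurable_cong_sets[OF sets_empirical refl])
  then show ?thesis using prob_space_empirical[OF N] unfolding P1_def by auto
qed

lemma return_zero_in_P1: "return borel (0::real^'d) \<in> P1"
  unfolding P1_def by (auto simp: prob_space_return nn_integral_return intro!: integrableI_bounded)

lemma empirical_all_zero:
  assumes "N \<ge> 1" "\<And>j. j \<in> {1..N} \<Longrightarrow> xs j = (0::real^'d)"
  shows "empirical N xs = return borel 0"
proof -
  interpret prob_space "uniform_count_measure {1..N}"
    using assms by (intro prob_space_uniform_count_measure) auto
  have "empirical N xs = distr (uniform_count_measure {1..N}) borel (\<lambda>_. 0::real^'d)"
    unfolding empirical_def by (rule distr_cong) (auto simp: space_uniform_count_measure assms)
  also have "\<dots> = return borel 0" by (rule distr_const) simp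
  finally show ?thesis .
qed

lemma measurable_empirical:
  fixes xs :: "'a \<Rightarrow> nat \<Rightarrow> real^'d"
  assumes N: "N \<ge> 1" and m: "\<And>k. k \<in> {1..N} \<Longrightarrow> (\<lambda>\<omega>. xs \<omega> k) \<in> borel_measurable Mx"
  shows "(\<lambda>\<omega>. empirical N (xs \<omega>)) \<in> measurable Mx (restrict_space (subprob_algebra borel) P1)"
proof (rule measurable_restrict_space2)
  show "(\<lambda>\<omega>. empirical N (xs \<omega>)) \<in> space Mx \<rightarrow> P1" using empirical_in_P1[OF N] by auto
  show "(\<lambda>\<omega>. empirical N (xs \<omega>)) \<in> measurable Mx (subprob_algebra borel)"
  proof (rule measurable_subprob_algebra)
    fix \<omega> show "subprob_space (empirical N (xs \<omega>))"
      using prob_space_empirical[OF N] by (rule prob_space_imp_subprob_space)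
  next
    fix B :: "(real^'d) set" assume B: "B \<in> sets borel"
    have "(\<lambda>\<omega>. emeasure (empirical N (xs \<omega>)) B)
        = (\<lambda>\<omega>. \<Sum>j\<in>{1..N}. ennreal (1 / real N) * indicator B (xs \<omega> j))"
    proof
      fix \<omega>
      have "emeasure (empirical N (xs \<omega>)) B = (\<integral>\<^sup>+ x. indicator B x \<partial>empirical N (xs \<omega>))"
        using B by (simp add: nn_integral_indicator)
      also have "\<dots> = (\<Sum>j\<in>{1..N}. ennreal (1 / real N) * indicator B (xs \<omega> j))"
        by (rule nn_integral_empirical) (use B in simp)
      finally show "emeasure (empirical N (xs \<omega>)) B
          = (\<Sum>j\<in>{1..N}. ennreal (1 / real N) * indicator B (xs \<omega> j))" .
    qed
    moreover have "(\<lambda>\<omega>. \<Sum>j\<in>{1..N}. ennreal (1 / real N) * indicator B (xs \<omega> j))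
        \<in> borel_measurable Mx"
    proof (intro borel_measurable_sum borel_measurable_times_ennreal borel_measurable_const)
      fix j assume "j \<in> {1..N}"
      show "(\<lambda>\<omega>. indicator B (xs \<omega> j) :: ennreal) \<in> borel_measurable Mx"
        by (rule measurable_compose[OF m[OF \<open>j \<in> {1..N}\<close>] borel_measurable_indicator[OF B]])
    qed
    ultimately show "(\<lambda>\<omega>. emeasure (empirical N (xs \<omega>)) B) \<in> borel_measurable Mx"
      by (simp only:)
  qed simp
qed

section \<open>Wasserstein distance to the Dirac mass at the origin\<close>

lemma coupling_with_return_zero:
  assumes mu: "\<mu> \<in> P1"
  shows "distr \<mu> (borel \<Otimes>\<^sub>M borel) (\<lambda>x::real^'d. (x, 0)) \<in> couplings \<mu> (return borel 0)"
proof -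
  interpret prob_space \<mu> using mu by (simp add: P1_def)
  have sm: "sets \<mu> = sets borel" using mu by (simp add: P1_def)
  have gm: "(\<lambda>x::real^'d. (x, 0::real^'d)) \<in> measurable \<mu> (borel \<Otimes>\<^sub>M borel)"
    unfolding measurable_cong_sets[OF sm refl] by measurable
  define \<pi> where "\<pi> = distr \<mu> (borel \<Otimes>\<^sub>M borel) (\<lambda>x::real^'d. (x, 0::real^'d))"
  have "prob_space \<pi>" unfolding \<pi>_def by (rule prob_space_distr[OF gm])
  moreover have "distr \<pi> borel fst = \<mu>"
    unfolding \<pi>_def by (subst distr_distr) (auto intro: gm distr_id2 simp: comp_def sm)
  moreover have "distr \<pi> borel snd = return borel 0"
    unfolding \<pi>_def by (subst distr_distr) (auto intro: gm simp: comp_def)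
  ultimately show ?thesis unfolding couplings_def \<pi>_def by simp
qed

lemma first_moment_le_transport_cost:
  fixes \<mu> \<nu> :: "(real^'d) measure"
  assumes pi: "\<pi> \<in> couplings \<mu> \<nu>"
  shows "(\<integral>\<^sup>+ x. ennreal (norm x) \<partial>\<mu>)
       \<le> (\<integral>\<^sup>+ p. ennreal (dist (fst p) (snd p)) \<partial>\<pi>) + (\<integral>\<^sup>+ y. ennreal (norm y) \<partial>\<nu>)"
proof -
  have sp: "sets \<pi> = sets (borel \<Otimes>\<^sub>M borel)" and d1: "distr \<pi> borel fst = \<mu>"
    and d2: "distr \<pi> borel snd = \<nu>"
    using pi unfolding couplings_def by auto
  note msp = measurable_cong_sets[OF sp refl]
  have mfst: "fst \<in> measurable \<pi> (borel :: (real^'d) measure)" unfolding msp by measurable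
  have msnd: "snd \<in> measurable \<pi> (borel :: (real^'d) measure)" unfolding msp by measurable
  have "(\<integral>\<^sup>+ x. ennreal (norm x) \<partial>\<mu>) = (\<integral>\<^sup>+ p. ennreal (norm (fst p)) \<partial>\<pi>)"
    unfolding d1[symmetric] by (rule nn_integral_distr[OF mfst]) simp
  also have "\<dots> \<le> (\<integral>\<^sup>+ p. ennreal (dist (fst p) (snd p)) + ennreal (norm (snd p)) \<partial>\<pi>)"
  proof (rule nn_integral_mono)
    fix p :: "(real^'d) \<times> (real^'d)"
    have "norm (fst p) \<le> dist (fst p) (snd p) + norm (snd p)"
      using norm_triangle_ineq[of "fst p - snd p" "snd p"] by (simp add: dist_norm)
    then show "ennreal (norm (fst p)) \<le> ennreal (dist (fst p) (snd p)) + ennreal (norm (snd p))"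
      by (simp add: ennreal_plus[symmetric] del: ennreal_plus)
  qed
  also have "\<dots> = (\<integral>\<^sup>+ p. ennreal (dist (fst p) (snd p)) \<partial>\<pi>) + (\<integral>\<^sup>+ p. ennreal (norm (snd p)) \<partial>\<pi>)"
    by (rule nn_integral_add) (auto simp: msp)
  also have "(\<integral>\<^sup>+ p. ennreal (norm (snd p)) \<partial>\<pi>) = (\<integral>\<^sup>+ y. ennreal (norm y) \<partial>\<nu>)"
    unfolding d2[symmetric] by (rule nn_integral_distr[OF msnd, symmetric]) simp
  finally show ?thesis .
qed

text \<open>The Wasserstein distance to \<open>\<delta>\<^sub>0\<close> is the first moment; the optimal coupling is
  the one that transports every point to the origin.\<close>
lemma W1_return_zero:
  assumes mu: "\<mu> \<in> P1"
  shows "W1 \<mu> (return borel (0::real^'d)) = enn2real (\<integral>\<^sup>+ x. ennreal (norm x) \<partial>\<mu>)"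
proof -
  let ?cost = "\<lambda>\<pi>. \<integral>\<^sup>+ p. ennreal (dist (fst p) (snd p)) \<partial>\<pi>"
  let ?m = "\<integral>\<^sup>+ x. ennreal (norm x) \<partial>\<mu>"
  have sm: "sets \<mu> = sets borel" using mu by (simp add: P1_def)
  have gm: "(\<lambda>x::real^'d. (x, 0::real^'d)) \<in> measurable \<mu> (borel \<Otimes>\<^sub>M borel)"
    unfolding measurable_cong_sets[OF sm refl] by measurable
  have "(INF \<pi>\<in>couplings \<mu> (return borel 0). ?cost \<pi>)
      \<le> ?cost (distr \<mu> (borel \<Otimes>\<^sub>M borel) (\<lambda>x. (x, 0::real^'d)))"
    by (rule INF_lower[OF coupling_with_return_zero[OF mu]])
  also have "\<dots> = ?m"
    by (subst nn_integral_distr[OF gm]) (auto simp: dist_norm)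
  finally have "(INF \<pi>\<in>couplings \<mu> (return borel 0). ?cost \<pi>) \<le> ?m" .
  moreover have "?m \<le> ?cost \<pi>" if "\<pi> \<in> couplings \<mu> (return borel 0)" for \<pi>
    using first_moment_le_transport_cost[OF that] by (simp add: nn_integral_return)
  ultimately have "(INF \<pi>\<in>couplings \<mu> (return borel 0). ?cost \<pi>) = ?m"
    by (intro antisym INF_greatest) auto
  then show ?thesis unfolding W1_def by simp
qed

lemma W1_empirical_return_zero:
  assumes "N \<ge> 1"
  shows "W1 (empirical N xs) (return borel (0::real^'d)) = (\<Sum>j\<in>{1..N}. norm (xs j)) / real N"
proof -
  have "(\<integral>\<^sup>+ x. ennreal (norm x) \<partial>empirical N xs)
      = (\<Sum>j\<in>{1..N}. ennreal (1 / real N) * ennreal (norm (xs j)))"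
    by (rule nn_integral_empirical) simp
  also have "\<dots> = ennreal ((\<Sum>j\<in>{1..N}. norm (xs j)) / real N)"
    by (simp add: ennreal_mult[symmetric] sum_divide_distrib)
  finally show ?thesis
    using W1_return_zero[OF empirical_in_P1[OF assms], of xs]
    by (simp add: sum_nonneg)
qed

section \<open>Linear growth of the interaction\<close>

lemma Dlip_lipschitz:
  assumes Dz: "Dlip f z \<le> ennreal L" and L: "L \<ge> 0" and P: "\<mu>1 \<in> P1" "\<mu>2 \<in> P1"
    and ne: "(x1, \<mu>1) \<noteq> (x2, \<mu>2)" and pos: "0 < dist x1 x2 + W1 \<mu>1 \<mu>2"
  shows "norm (f x1 \<mu>1 z - f x2 \<mu>2 z) \<le> L * (dist x1 x2 + W1 \<mu>1 \<mu>2)"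
proof -
  have "ennreal (norm (f x1 \<mu>1 z - f x2 \<mu>2 z) / (dist x1 x2 + W1 \<mu>1 \<mu>2)) \<le> Dlip f z"
    unfolding Dlip_def by (rule SUP_upper2[of "((x1, \<mu>1), (x2, \<mu>2))"]) (use P ne in auto)
  then have "norm (f x1 \<mu>1 z - f x2 \<mu>2 z) / (dist x1 x2 + W1 \<mu>1 \<mu>2) \<le> L"
    using Dz L by (metis ennreal_le_iff order_trans)
  then show ?thesis using pos by (simp add: divide_le_eq mult.commute)
qed

lemma f_empirical_growth:
  fixes f :: "real^'d \<Rightarrow> (real^'d) measure \<Rightarrow> 'z \<Rightarrow> real^'d"
  assumes Dz: "Dlip f z \<le> ennreal L" and L: "L \<ge> 0" and N: "N \<ge> 1"
  shows "norm (f x (empirical N xs) z) \<le> L * (norm x + (\<Sum>j\<in>{1..N}. norm (xs j)) / real N) + D1 f z"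
proof -
  define \<mu> where "\<mu> = empirical N xs"
  define avg where "avg = (\<Sum>j\<in>{1..N}. norm (xs j)) / real N"
  have W: "W1 \<mu> (return borel 0) = avg"
    unfolding \<mu>_def avg_def by (rule W1_empirical_return_zero[OF N])
  have avg0: "avg \<ge> 0" unfolding avg_def by (auto intro!: sum_nonneg divide_nonneg_nonneg)
  have diff: "norm (f x \<mu> z - f 0 (return borel 0) z) \<le> L * (norm x + avg)"
  proof (cases "(x, \<mu>) = (0, return borel 0)")
    case True then show ?thesis using L avg0 by simp
  next
    case ne: False
    have "norm x + avg > 0"
    proof (rule ccontr)
      assume "\<not> norm x + avg > 0"
      then have "norm x = 0" "avg = 0" using avg0 norm_ge_zero[of x] by linarith+
      moreover from \<open>avg = 0\<close> have "\<forall>j\<in>{1..N}. xs j = 0"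
        using N by (simp add: avg_def sum_nonneg_eq_0_iff)
      ultimately show False using ne empirical_all_zero[OF N, of xs] by (simp add: \<mu>_def)
    qed
    then show ?thesis
      using Dlip_lipschitz[OF Dz L empirical_in_P1[OF N, of xs, folded \<mu>_def] return_zero_in_P1 ne] W
      by (simp add: \<mu>_def dist_norm)
  qed
  have "norm (f x \<mu> z) \<le> norm (f x \<mu> z - f 0 (return borel 0) z) + norm (f 0 (return borel 0) z)"
    using norm_triangle_ineq[of "f x \<mu> z - f 0 (return borel 0) z" "f 0 (return borel 0) z"] by simp
  then show ?thesis using diff unfolding D1_def \<mu>_def avg_def by simp
qed

section \<open>Elementary exponential inequalities\<close>

text \<open>This is what makes the moment recursion contractive.\<close>
lemma exp_absorb:
  fixes L \<rho> t :: real
  assumes L: "L > 0" and \<rho>: "0 < \<rho>" "\<rho> < 1"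
  shows "exp (\<rho> * t) \<le> exp t / L + exp (\<rho> * (ln L / (1 - \<rho>)))"
proof (cases "t \<ge> ln L / (1 - \<rho>)")
  case True
  then have "ln L \<le> (1 - \<rho>) * t" using \<rho> by (simp add: field_simps)
  then have "L \<le> exp ((1 - \<rho>) * t)" using L by (metis exp_le_cancel_iff exp_ln)
  then have "exp (\<rho> * t) * L \<le> exp (\<rho> * t) * exp ((1 - \<rho>) * t)" by (intro mult_left_mono) auto
  also have "\<dots> = exp t" by (simp add: exp_add[symmetric] algebra_simps)
  finally have "exp (\<rho> * t) \<le> exp t / L" using L by (simp add: field_simps)
  then show ?thesis using exp_gt_zero[of "\<rho> * (ln L / (1 - \<rho>))"] by linarith
next
  case False
  then have "\<rho> * t \<le> \<rho> * (ln L / (1 - \<rho>))" using \<rho> by (intro mult_left_mono) auto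
  then show ?thesis using L by (smt (verit) divide_nonneg_pos exp_gt_zero exp_le_cancel_iff)
qed

lemma exp_average_le:
  fixes y :: "nat \<Rightarrow> real"
  assumes N: "N \<ge> 1"
  shows "exp ((\<Sum>j\<in>{1..N}. y j) / real N) \<le> (\<Sum>j\<in>{1..N}. exp (y j)) / real N"
proof -
  have "exp (\<Sum>j\<in>{1..N}. (1 / real N) * y j) \<le> (\<Sum>j\<in>{1..N}. (1 / real N) * exp (y j))"
    using convex_on_sum[OF _ _ exp_convex, of "{1..N}" "\<lambda>_. 1 / real N" y] N by simp
  then show ?thesis by (simp add: sum_divide_distrib[symmetric] sum_distrib_left[symmetric])
qed

lemma exp_step_bound:
  fixes r s \<rho> p q \<beta> \<delta> D \<eta> K :: real and ys :: "nat \<Rightarrow> real"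
  assumes N: "N \<ge> 1" and s: "s \<le> \<rho> * (p * r + q * ((\<Sum>j\<in>{1..N}. ys j) / real N)) + \<delta> * D"
    and pq: "p \<ge> 0" "q \<ge> 0" "p + q = 1" and \<beta>: "\<beta> \<ge> 0"
    and Y: "\<And>t. exp (\<rho> * t) \<le> \<eta> * exp t + K"
  shows "exp (\<beta> * s) \<le> (\<eta> * (p * exp (\<beta> * r) + q * ((\<Sum>j\<in>{1..N}. exp (\<beta> * ys j)) / real N)) + K)
                         * exp (\<beta> * \<delta> * D)"
proof -
  define avg where "avg = (\<Sum>j\<in>{1..N}. ys j) / real N"
  define Eavg where "Eavg = (\<Sum>j\<in>{1..N}. exp (\<beta> * ys j)) / real N"
  have "\<beta> * s \<le> p * (\<rho> * (\<beta> * r)) + q * (\<rho> * (\<beta> * avg)) + \<beta> * \<delta> * D"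
    using mult_left_mono[OF s \<beta>] by (simp add: avg_def algebra_simps)
  then have h1: "exp (\<beta> * s) \<le> exp (p * (\<rho> * (\<beta> * r)) + q * (\<rho> * (\<beta> * avg))) * exp (\<beta> * \<delta> * D)"
    by (simp flip: exp_add)
  have h2: "exp (p * (\<rho> * (\<beta> * r)) + q * (\<rho> * (\<beta> * avg)))
      \<le> p * exp (\<rho> * (\<beta> * r)) + q * exp (\<rho> * (\<beta> * avg))"
  proof -
    have "p = 1 - q" "q \<le> 1" using pq by auto
    then show ?thesis
      using convex_onD[OF exp_convex, of q "\<rho> * (\<beta> * r)" "\<rho> * (\<beta> * avg)"] pq(2) by simp
  qed
  have "exp (\<rho> * (\<beta> * avg)) \<le> (\<Sum>j\<in>{1..N}. exp (\<rho> * (\<beta> * ys j))) / real N"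
    using exp_average_le[OF N, of "\<lambda>j. \<rho> * (\<beta> * ys j)"]
    by (simp add: avg_def sum_distrib_left)
  also have "\<dots> \<le> (\<Sum>j\<in>{1..N}. \<eta> * exp (\<beta> * ys j) + K) / real N"
    by (intro divide_right_mono sum_mono Y) simp
  also have "\<dots> = \<eta> * Eavg + K"
    using N by (simp add: Eavg_def sum.distrib sum_distrib_left field_simps)
  finally have h3: "exp (\<rho> * (\<beta> * avg)) \<le> \<eta> * Eavg + K" .
  have "p * exp (\<rho> * (\<beta> * r)) + q * exp (\<rho> * (\<beta> * avg))
      \<le> p * (\<eta> * exp (\<beta> * r) + K) + q * (\<eta> * Eavg + K)"
    using pq h3 Y[of "\<beta> * r"] by (intro add_mono mult_left_mono) auto
  also have "\<dots> = \<eta> * (p * exp (\<beta> * r) + q * Eavg) + (p + q) * K"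
    by (simp add: algebra_simps)
  also have "\<dots> = \<eta> * (p * exp (\<beta> * r) + q * Eavg) + K"
    using pq(3) by simp
  finally have h4: "p * exp (\<rho> * (\<beta> * r)) + q * exp (\<rho> * (\<beta> * avg))
      \<le> \<eta> * (p * exp (\<beta> * r) + q * Eavg) + K" .
  show ?thesis
    using order_trans[OF h1 mult_right_mono[OF order_trans[OF h2 h4] exp_ge_zero]]
    unfolding Eavg_def .
qed

lemma particle_norm_step:
  fixes f :: "real^'d \<Rightarrow> (real^'d) measure \<Rightarrow> 'z \<Rightarrow> real^'d"
  assumes A: "onorm (\<lambda>x. A *v x) \<le> \<kappa>" and \<delta>: "\<delta> \<ge> 0" and L: "L \<ge> 0" and N: "N \<ge> 1"
    and Dz: "Dlip f (eps i (Suc n) \<omega>) \<le> ennreal L"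
  shows "norm (particle A \<delta> f X0 eps N (Suc n) i \<omega>)
    \<le> (\<kappa> + \<delta> * L) * norm (particle A \<delta> f X0 eps N n i \<omega>)
      + \<delta> * L * ((\<Sum>j\<in>{1..N}. norm (particle A \<delta> f X0 eps N n j \<omega>)) / real N)
      + \<delta> * D1 f (eps i (Suc n) \<omega>)"
proof -
  define x where "x = particle A \<delta> f X0 eps N n i \<omega>"
  define xs where "xs = (\<lambda>j. particle A \<delta> f X0 eps N n j \<omega>)"
  define z where "z = eps i (Suc n) \<omega>"
  have "norm (A *v x) \<le> onorm (\<lambda>x. A *v x) * norm x" by (rule onorm) simp
  also have "\<dots> \<le> \<kappa> * norm x" by (intro mult_right_mono A) simp
  finally have Ax: "norm (A *v x) \<le> \<kappa> * norm x" .
  have "\<delta> * norm (f x (empirical N xs) z)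
      \<le> \<delta> * (L * (norm x + (\<Sum>j\<in>{1..N}. norm (xs j)) / real N) + D1 f z)"
    using f_empirical_growth[OF Dz[folded z_def] L N] \<delta> by (rule mult_left_mono)
  moreover have "norm (particle A \<delta> f X0 eps N (Suc n) i \<omega>) \<le> norm (A *v x) + \<delta> * norm (f x (empirical N xs) z)"
    using norm_triangle_ineq[of "A *v x" "\<delta> *\<^sub>R f x (empirical N xs) z"] \<delta>
    by (simp add: x_def xs_def z_def)
  ultimately show ?thesis using Ax by (simp add: x_def xs_def z_def algebra_simps)
qed

lemma particle_exp_step:
  fixes f :: "real^'d \<Rightarrow> (real^'d) measure \<Rightarrow> 'z \<Rightarrow> real^'d"
  assumes A: "onorm (\<lambda>x. A *v x) \<le> \<kappa>" and \<delta>: "\<delta> \<ge> 0" and L: "L \<ge> 0" and N: "N \<ge> 1"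
    and Dz: "Dlip f (eps i (Suc n) \<omega>) \<le> ennreal L" and \<beta>: "\<beta> \<ge> 0"
    and \<rho>: "\<rho> = \<kappa> + 2 * \<delta> * L" "\<rho> > 0" and Y: "\<And>t. exp (\<rho> * t) \<le> \<eta> * exp t + K"
  shows "exp (\<beta> * norm (particle A \<delta> f X0 eps N (Suc n) i \<omega>))
    \<le> (\<eta> * ((\<kappa> + \<delta> * L) / \<rho> * exp (\<beta> * norm (particle A \<delta> f X0 eps N n i \<omega>))
           + \<delta> * L / \<rho> * ((\<Sum>j\<in>{1..N}. exp (\<beta> * norm (particle A \<delta> f X0 eps N n j \<omega>))) / real N)) + K)
      * exp (\<beta> * \<delta> * D1 f (eps i (Suc n) \<omega>))"
proof (rule exp_step_bound[OF N _ _ _ _ \<beta> Y])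
  have "0 \<le> \<kappa>" using A onorm_pos_le[OF matrix_vector_mul_bounded_linear, of A] by simp
  then show "0 \<le> (\<kappa> + \<delta> * L) / \<rho>" "0 \<le> \<delta> * L / \<rho>" using \<delta> L \<rho> by auto
  have "(\<kappa> + \<delta> * L) / \<rho> + \<delta> * L / \<rho> = \<rho> / \<rho>"
    unfolding \<rho>(1) by (simp add: add_divide_distrib[symmetric] algebra_simps)
  then show "(\<kappa> + \<delta> * L) / \<rho> + \<delta> * L / \<rho> = 1" using \<rho>(2) by simp
  show "norm (particle A \<delta> f X0 eps N (Suc n) i \<omega>)
    \<le> \<rho> * ((\<kappa> + \<delta> * L) / \<rho> * norm (particle A \<delta> f X0 eps N n i \<omega>)
      + \<delta> * L / \<rho> * ((\<Sum>j\<in>{1..N}. norm (particle A \<delta> f X0 eps N n j \<omega>)) / real N))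
      + \<delta> * D1 f (eps i (Suc n) \<omega>)"
  proof -
    have eq: "\<rho> * ((\<kappa> + \<delta> * L) / \<rho> * a + \<delta> * L / \<rho> * b) = (\<kappa> + \<delta> * L) * a + \<delta> * L * b"
      for a b using \<rho>(2) by (simp add: field_simps)
    show ?thesis
      unfolding eq by (rule particle_norm_step[where eps=eps and i=i and n=n and \<omega>=\<omega>, OF A \<delta> L N Dz])
  qed
qed

section \<open>Independence and factorisation of integrals\<close>

lemma sigma_algebra_Int_stable: "sigma_algebra \<Omega> S \<Longrightarrow> Int_stable S"
  by (intro algebra.Int_stable sigma_algebra.axioms(1))

lemma (in prob_space) indep_set_mono:
  "indep_set A B \<Longrightarrow> A' \<subseteq> A \<Longrightarrow> B' \<subseteq> B \<Longrightarrow> indep_set A' B'"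
  unfolding indep_set_def by (rule indep_sets_mono_sets) (auto split: bool.split)

text \<open>This is how the initial
  conditions and the noise up to time \<open>n\<close> are shown to be independent of the fresh noise.\<close>
lemma (in prob_space) indep_set_join:
  assumes init: "indep_set SX SE" and saX: "sigma_algebra (space M) SX"
    and saE: "sigma_algebra (space M) SE"
    and T0: "T0 \<subseteq> SE" and T1: "T1 \<subseteq> SE" and i01: "indep_set T0 T1"
    and sa0: "sigma_algebra (space M) T0" and st1: "Int_stable T1"
  shows "indep_set (sigma_sets (space M) {a \<inter> b | a b. a \<in> SX \<and> b \<in> T0}) (sigma_sets (space M) T1)"
proof (rule indep_set_sigma_sets)
  have evX: "SX \<subseteq> events" and evE: "SE \<subseteq> events" using init by (auto simp: indep_sets2_eq)
  show "indep_set {a \<inter> b | a b. a \<in> SX \<and> b \<in> T0} T1"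
  proof (rule indep_setI)
    show "{a \<inter> b | a b. a \<in> SX \<and> b \<in> T0} \<subseteq> events" using evX evE T0 by auto
    show "T1 \<subseteq> events" using T1 evE by auto
  next
    fix h c assume h: "h \<in> {a \<inter> b | a b. a \<in> SX \<and> b \<in> T0}" and c: "c \<in> T1"
    then obtain a b where ab: "h = a \<inter> b" "a \<in> SX" "b \<in> T0" by auto
    have bc: "b \<inter> c \<in> SE" using ab c T0 T1 by (intro Int_stableD[OF sigma_algebra_Int_stable[OF saE]]) auto
    have "prob (h \<inter> c) = prob (a \<inter> (b \<inter> c))" using ab by (simp add: Int_assoc)
    also have "\<dots> = prob a * prob (b \<inter> c)" using indep_setD[OF init ab(2) bc] .
    also have "prob (b \<inter> c) = prob b * prob c" using indep_setD[OF i01 ab(3) c] .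
    also have "prob h = prob a * prob b" using indep_setD[OF init ab(2)] T0 ab by auto
    ultimately show "prob (h \<inter> c) = prob h * prob c" by simp
  qed
  show "Int_stable {a \<inter> b | a b. a \<in> SX \<and> b \<in> T0}"
  proof (rule Int_stableI)
    fix x y assume "x \<in> {a \<inter> b | a b. a \<in> SX \<and> b \<in> T0}" "y \<in> {a \<inter> b | a b. a \<in> SX \<and> b \<in> T0}"
    then obtain a b a' b' where "x = a \<inter> b" "a \<in> SX" "b \<in> T0" "y = a' \<inter> b'" "a' \<in> SX" "b' \<in> T0"
      by auto
    moreover have "a \<inter> a' \<in> SX"
      using \<open>a \<in> SX\<close> \<open>a' \<in> SX\<close> by (rule Int_stableD[OF sigma_algebra_Int_stable[OF saX]])
    moreover have "b \<inter> b' \<in> T0"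
      using \<open>b \<in> T0\<close> \<open>b' \<in> T0\<close> by (rule Int_stableD[OF sigma_algebra_Int_stable[OF sa0]])
    moreover have "x \<inter> y = (a \<inter> a') \<inter> (b \<inter> b')" using calculation by auto
    ultimately show "x \<inter> y \<in> {a \<inter> b | a b. a \<in> SX \<and> b \<in> T0}" by blast
  qed
  show "Int_stable T1" by (rule st1)
qed

lemma (in prob_space) nn_integral_indep_factor:
  fixes u v :: "'a \<Rightarrow> ennreal"
  assumes ind: "indep_set S T" and saS: "sigma_algebra (space M) S"
    and saT: "sigma_algebra (space M) T"
    and um: "u \<in> borel_measurable M" and vm: "v \<in> borel_measurable M"
    and uS: "\<And>A. A \<in> sets borel \<Longrightarrow> u -` A \<inter> space M \<in> S"
    and vT: "\<And>A. A \<in> sets borel \<Longrightarrow> v -` A \<inter> space M \<in> T"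
  shows "(\<integral>\<^sup>+ \<omega>. u \<omega> * v \<omega> \<partial>M) = (\<integral>\<^sup>+ \<omega>. u \<omega> \<partial>M) * (\<integral>\<^sup>+ \<omega>. v \<omega> \<partial>M)"
proof -
  have "indep_var borel u borel v"
    unfolding indep_var_eq
  proof (intro conjI)
    show "random_variable borel u" "random_variable borel v" using um vm by auto
    show "indep_set (sigma_sets (space M) {u -` A \<inter> space M |A. A \<in> sets borel})
        (sigma_sets (space M) {v -` A \<inter> space M |A. A \<in> sets borel})"
      by (rule indep_set_mono[OF ind];
          intro sigma_algebra.sigma_sets_subset[OF saS] sigma_algebra.sigma_sets_subset[OF saT];
          auto intro: uS vT)
  qed
  then have "indep_vars (\<lambda>_. borel) (case_bool u v) UNIV"
    unfolding indep_var_def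
    by (rule indep_vars_cong[THEN iffD1, rotated -1]) (auto split: bool.split)
  then have "(\<integral>\<^sup>+ \<omega>. (\<Prod>i\<in>UNIV. case_bool u v i \<omega>) \<partial>M) = (\<Prod>i\<in>UNIV. \<integral>\<^sup>+ \<omega>. case_bool u v i \<omega> \<partial>M)"
    by (intro indep_vars_nn_integral) auto
  then show ?thesis by (simp add: UNIV_bool mult.commute)
qed

lemma (in prob_space) nn_integral_affine_le:
  fixes e0 :: "'a \<Rightarrow> real" and e :: "nat \<Rightarrow> 'a \<Rightarrow> real"
  assumes S: "finite S" and c: "c \<ge> 0" and d: "d \<ge> 0" and K: "K \<ge> 0" and B: "B \<ge> 0"
    and e0: "\<And>\<omega>. e0 \<omega> \<ge> 0" "e0 \<in> borel_measurable M" "(\<integral>\<^sup>+\<omega>. ennreal (e0 \<omega>) \<partial>M) \<le> ennreal B"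
    and e: "\<And>k \<omega>. e k \<omega> \<ge> 0" "\<And>k. k \<in> S \<Longrightarrow> e k \<in> borel_measurable M"
       "\<And>k. k \<in> S \<Longrightarrow> (\<integral>\<^sup>+\<omega>. ennreal (e k \<omega>) \<partial>M) \<le> ennreal B"
  shows "(\<integral>\<^sup>+\<omega>. ennreal (c * e0 \<omega> + (\<Sum>k\<in>S. d * e k \<omega>) + K) \<partial>M)
       \<le> ennreal (c * B + real (card S) * d * B + K)"
proof -
  have eq: "ennreal (c * e0 \<omega> + (\<Sum>k\<in>S. d * e k \<omega>) + K)
      = ennreal c * ennreal (e0 \<omega>) + (\<Sum>k\<in>S. ennreal d * ennreal (e k \<omega>)) + ennreal K" for \<omega>
  proof -
    have "ennreal (c * e0 \<omega> + (\<Sum>k\<in>S. d * e k \<omega>) + K)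
        = ennreal (c * e0 \<omega>) + ennreal (\<Sum>k\<in>S. d * e k \<omega>) + ennreal K"
      using c d K e0(1) e(1) by (simp add: ennreal_plus sum_nonneg)
    also have "ennreal (\<Sum>k\<in>S. d * e k \<omega>) = (\<Sum>k\<in>S. ennreal (d * e k \<omega>))"
      using d e(1) by (simp add: sum_ennreal)
    finally show ?thesis using c d e0(1) e(1) by (simp add: ennreal_mult)
  qed
  have "(\<integral>\<^sup>+\<omega>. ennreal (c * e0 \<omega> + (\<Sum>k\<in>S. d * e k \<omega>) + K) \<partial>M)
      = ennreal c * (\<integral>\<^sup>+\<omega>. ennreal (e0 \<omega>) \<partial>M)
        + (\<Sum>k\<in>S. ennreal d * (\<integral>\<^sup>+\<omega>. ennreal (e k \<omega>) \<partial>M)) + ennreal K"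
    using e0(2) e(2) by (simp add: eq nn_integral_add nn_integral_cmult nn_integral_sum emeasure_space_1)
  also have "\<dots> \<le> ennreal c * ennreal B + (\<Sum>k\<in>S. ennreal d * ennreal B) + ennreal K"
    by (intro add_mono mult_left_mono sum_mono e0(3) e(3) order_refl) auto
  also have "\<dots> = ennreal (c * B + real (card S) * d * B + K)"
    using c d B K by (simp add: ennreal_plus ennreal_mult[symmetric] ennreal_of_nat_eq_real_of_nat mult.assoc)
  finally show ?thesis .
qed

section \<open>Measurability of the particle system\<close>

lemma vimage_in_vimage_algebra:
  assumes Y: "Y \<in> X \<rightarrow> space P" and h: "h \<in> measurable P Q"
    and g: "\<And>x. x \<in> X \<Longrightarrow> g x = h (Y x)" and B: "B \<in> sets Q"
  shows "g -` B \<inter> X \<in> sets (vimage_algebra X Y P)"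
proof -
  have "(\<lambda>x. h (Y x)) \<in> measurable (vimage_algebra X Y P) Q"
    by (rule measurable_compose[OF measurable_vimage_algebra1[OF Y] h])
  then have "g \<in> measurable (vimage_algebra X Y P) Q"
    by (rule measurable_cong[THEN iffD1, rotated]) (simp add: g)
  from measurable_sets[OF this B] show ?thesis by simp
qed

lemma sigma_algebra_vimage_algebra: "sigma_algebra X (sets (vimage_algebra X Y P))"
  using sets.sigma_algebra_axioms[of "vimage_algebra X Y P"] by simp

locale particle_system =
  fixes M :: "'a measure" and A :: "real^'d^'d" and \<delta> :: real
    and f :: "real^'d \<Rightarrow> (real^'d) measure \<Rightarrow> real^'m \<Rightarrow> real^'d"
    and X0 :: "nat \<Rightarrow> nat \<Rightarrow> 'a \<Rightarrow> real^'d"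
    and eps :: "nat \<Rightarrow> nat \<Rightarrow> 'a \<Rightarrow> real^'m"
  assumes M: "prob_space M"
    and f_meas: "(\<lambda>(x, \<mu>, z). f x \<mu> z) \<in>
        measurable (borel \<Otimes>\<^sub>M (restrict_space (subprob_algebra borel) P1 \<Otimes>\<^sub>M borel)) borel"
    and X0_meas: "\<And>N i. N \<ge> 1 \<Longrightarrow> i \<in> {1..N} \<Longrightarrow> X0 N i \<in> borel_measurable M"
    and eps_meas: "\<And>i n. i \<ge> 1 \<Longrightarrow> n \<ge> 1 \<Longrightarrow> eps i n \<in> borel_measurable M"
begin

sublocale prob_space M by (rule M)

definition past_generators :: "nat \<Rightarrow> (nat \<times> nat) set \<Rightarrow> 'a set set" where
  "past_generators N K =
     (\<Union>i\<in>{1..N}. {X0 N i -` B \<inter> space M | B. B \<in> sets (borel :: (real^'d) measure)})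
     \<union> (\<Union>p\<in>K. {eps (fst p) (snd p) -` B \<inter> space M | B. B \<in> sets (borel :: (real^'m) measure)})"

definition past_algebra :: "nat \<Rightarrow> (nat \<times> nat) set \<Rightarrow> 'a measure" where
  "past_algebra N K = measure_of (space M) (past_generators N K) (\<lambda>_. 0)"

lemma past_generators_Pow: "past_generators N K \<subseteq> Pow (space M)"
  unfolding past_generators_def by auto

lemma space_past_algebra[simp]: "space (past_algebra N K) = space M"
  using past_generators_Pow by (simp add: past_algebra_def space_measure_of_conv)

lemma sets_past_algebra: "sets (past_algebra N K) = sigma_sets (space M) (past_generators N K)"
  using past_generators_Pow by (simp add: past_algebra_def sets_measure_of)

lemma measurable_past_algebraI:
  fixes g :: "'a \<Rightarrow> 'b::topological_space"
  assumes "\<And>B. B \<in> sets borel \<Longrightarrow> g -` B \<inter> space M \<in> past_generators N K"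
  shows "g \<in> borel_measurable (past_algebra N K)"
  by (rule measurableI) (use assms in \<open>auto simp: sets_past_algebra\<close>)

lemma sets_past_algebra_subset:
  assumes K: "K \<subseteq> {1..} \<times> {1..}"
  shows "sets (past_algebra N K) \<subseteq> sets M"
proof -
  have "past_generators N K \<subseteq> sets M"
  proof
    fix S assume "S \<in> past_generators N K"
    then consider
        (init) i and B :: "(real^'d) set" where "i \<in> {1..N}" "B \<in> sets borel" "S = X0 N i -` B \<inter> space M"
      | (noise) p and B :: "(real^'m) set" where "p \<in> K" "B \<in> sets borel"
          "S = eps (fst p) (snd p) -` B \<inter> space M"
      unfolding past_generators_def by blast
    then show "S \<in> sets M"
    proof cases
      case init then show ?thesis using X0_meas[of N i] by (auto simp: measurable_def)
    next
      case noise then show ?thesis using eps_meas[of "fst p" "snd p"] K by (auto simp: measurable_def)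
    qed
  qed
  then show ?thesis unfolding sets_past_algebra by (rule sets.sigma_sets_subset)
qed

lemma measurable_from_past_algebra:
  assumes "K \<subseteq> {1..} \<times> {1..}" and "g \<in> measurable (past_algebra N K) Y"
  shows "g \<in> measurable M Y"
proof -
  have "measurable (past_algebra N K) Y \<subseteq> measurable M Y"
    by (rule measurable_mono) (use sets_past_algebra_subset[OF assms(1)] in auto)
  then show ?thesis using assms(2) by blast
qed

lemma measurable_f_at_return_zero: "(\<lambda>z. f 0 (return borel 0) z) \<in> borel_measurable borel"
proof -
  have r: "return borel (0::real^'d) \<in> space (restrict_space (subprob_algebra borel) P1)"
    using return_zero_in_P1 by (auto simp: space_restrict_space space_subprob_algebra subprob_space_return)
  have "(\<lambda>z::real^'m. ((0::real^'d), return borel (0::real^'d), z))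
      \<in> measurable borel (borel \<Otimes>\<^sub>M (restrict_space (subprob_algebra borel) P1 \<Otimes>\<^sub>M borel))"
    by (intro measurable_Pair measurable_const r measurable_ident_sets refl) simp
  from measurable_compose[OF this f_meas] show ?thesis by simp
qed

lemma D1_measurable: "(\<lambda>z. D1 f z) \<in> borel_measurable borel"
  unfolding D1_def using measurable_compose[OF measurable_f_at_return_zero borel_measurable_norm] by simp

lemma particle_measurable_past:
  "N \<ge> 1 \<Longrightarrow> {1..} \<times> {1..n} \<subseteq> K \<Longrightarrow> j \<in> {1..N} \<Longrightarrow>
    (\<lambda>\<omega>. particle A \<delta> f X0 eps N n j \<omega>) \<in> borel_measurable (past_algebra N K)"
proof (induction n arbitrary: j)
  case 0
  show ?case by (rule measurable_past_algebraI) (use 0 in \<open>auto simp: past_generators_def\<close>)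
next
  case (Suc n)
  have IH: "(\<lambda>\<omega>. particle A \<delta> f X0 eps N n k \<omega>) \<in> borel_measurable (past_algebra N K)"
    if "k \<in> {1..N}" for k
  proof (rule Suc.IH[OF Suc.prems(1) _ that])
    show "{1..} \<times> {1..n} \<subseteq> K" using Suc.prems(2) by auto
  qed
  have emp: "(\<lambda>\<omega>. empirical N (\<lambda>k. particle A \<delta> f X0 eps N n k \<omega>))
      \<in> measurable (past_algebra N K) (restrict_space (subprob_algebra borel) P1)"
    by (rule measurable_empirical[OF Suc.prems(1) IH])
  have "(j, Suc n) \<in> K" using Suc.prems by auto
  then have noise: "eps j (Suc n) \<in> borel_measurable (past_algebra N K)"
    by (intro measurable_past_algebraI) (auto simp: past_generators_def)
  have interaction: "(\<lambda>\<omega>. f (particle A \<delta> f X0 eps N n j \<omega>) (empirical N (\<lambda>k. particle A \<delta> f X0 eps N n k \<omega>))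
        (eps j (Suc n) \<omega>)) \<in> borel_measurable (past_algebra N K)"
    using measurable_compose[OF measurable_Pair[OF IH[OF Suc.prems(3)] measurable_Pair[OF emp noise]] f_meas]
    by simp
  have linear: "(\<lambda>\<omega>. A *v particle A \<delta> f X0 eps N n j \<omega>) \<in> borel_measurable (past_algebra N K)"
    by (rule measurable_compose[OF IH[OF Suc.prems(3)]
          borel_measurable_continuous_onI[OF matrix_vector_mult_linear_continuous_on]])
  show ?case
    unfolding particle.simps
    by (intro borel_measurable_add linear borel_measurable_scaleR borel_measurable_const interaction)
qed

end

locale independent_particle_system = particle_system M A \<delta> f X0 eps
  for M :: "'a measure" and A :: "real^'d^'d" and \<delta> :: real
    and f :: "real^'d \<Rightarrow> (real^'d) measure \<Rightarrow> real^'m \<Rightarrow> real^'d"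
    and X0 :: "nat \<Rightarrow> nat \<Rightarrow> 'a \<Rightarrow> real^'d"
    and eps :: "nat \<Rightarrow> nat \<Rightarrow> 'a \<Rightarrow> real^'m" +
  assumes eps_indep: "prob_space.indep_vars M (\<lambda>_. borel) (\<lambda>(i, n). eps i n) ({1..} \<times> {1..})"
    and indep_init: "\<And>N. N \<ge> 1 \<Longrightarrow> prob_space.indep_set M
        (sets (vimage_algebra (space M) (\<lambda>\<omega>. \<lambda>i\<in>{1..N}. X0 N i \<omega>) (PiM {1..N} (\<lambda>_. borel))))
        (sets (vimage_algebra (space M) (\<lambda>\<omega>. \<lambda>p\<in>{1..} \<times> {1..}. eps (fst p) (snd p) \<omega>)
                (PiM ({1..} \<times> {1..}) (\<lambda>_. borel))))"
begin

definition initial_events :: "nat \<Rightarrow> 'a set set" where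
  "initial_events N = sets (vimage_algebra (space M) (\<lambda>\<omega>. \<lambda>i\<in>{1..N}. X0 N i \<omega>)
     (PiM {1..N} (\<lambda>_. borel :: (real^'d) measure)))"

definition all_noise_events :: "'a set set" where
  "all_noise_events = sets (vimage_algebra (space M) (\<lambda>\<omega>. \<lambda>p\<in>{1..} \<times> {1..}. eps (fst p) (snd p) \<omega>)
     (PiM ({1..} \<times> {1..}) (\<lambda>_. borel :: (real^'m) measure)))"

definition noise_events :: "nat \<times> nat \<Rightarrow> 'a set set" where
  "noise_events p = sigma_sets (space M)
     {eps (fst p) (snd p) -` B \<inter> space M | B. B \<in> sets (borel :: (real^'m) measure)}"

lemma sigma_algebra_initial_events: "sigma_algebra (space M) (initial_events N)"
  unfolding initial_events_def by (rule sigma_algebra_vimage_algebra)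

lemma sigma_algebra_all_noise_events: "sigma_algebra (space M) all_noise_events"
  unfolding all_noise_events_def by (rule sigma_algebra_vimage_algebra)

lemma sigma_algebra_noise_events: "sigma_algebra (space M) (noise_events p)"
  unfolding noise_events_def by (rule sigma_algebra_sigma_sets) auto

lemma noise_events_subset:
  assumes p: "p \<in> {1..} \<times> {1..}"
  shows "noise_events p \<subseteq> all_noise_events"
  unfolding noise_events_def all_noise_events_def
proof (rule sigma_algebra.sigma_sets_subset[OF sigma_algebra_vimage_algebra], safe)
  fix B :: "(real^'m) set" assume "B \<in> sets borel"
  then show "eps (fst p) (snd p) -` B \<inter> space M
      \<in> sets (vimage_algebra (space M) (\<lambda>\<omega>. \<lambda>p\<in>{1..} \<times> {1..}. eps (fst p) (snd p) \<omega>)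
           (PiM ({1..} \<times> {1..}) (\<lambda>_. borel)))"
    by (intro vimage_in_vimage_algebra[where h="\<lambda>v. v p"]) (use p in \<open>auto simp: space_PiM\<close>)
qed

lemma noise_events_indep: "indep_sets noise_events ({1..} \<times> {1..})"
proof -
  have "indep_sets (\<lambda>p. sigma_sets (space M)
      {(\<lambda>(i, n). eps i n) p -` B \<inter> space M | B. B \<in> sets (borel :: (real^'m) measure)}) ({1..} \<times> {1..})"
    using eps_indep unfolding indep_vars_def by simp
  then show ?thesis
    unfolding noise_events_def by (rule indep_sets_cong[THEN iffD1, rotated -1]) (auto simp: case_prod_beta)
qed

lemma past_noise_indep_next_noise:
  assumes i: "i \<ge> 1"
  shows "indep_set (sigma_sets (space M) (\<Union>p\<in>{1..} \<times> {1..n}. noise_events p)) (noise_events (i, Suc n))"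
proof -
  define I where "I = case_bool ({1..} \<times> {1..n}) {(i, Suc n)}"
  have "I b \<subseteq> {1..} \<times> {1..}" for b by (cases b) (use i in \<open>auto simp: I_def\<close>)
  then have "indep_sets noise_events (\<Union>b. I b)"
    by (intro indep_sets_mono_index[OF _ noise_events_indep]) blast
  then have collected: "indep_sets (\<lambda>b. sigma_sets (space M) (\<Union>p\<in>I b. noise_events p)) UNIV"
  proof (rule indep_sets_collect_sigma)
    show "Int_stable (noise_events p)" for p by (rule sigma_algebra_Int_stable[OF sigma_algebra_noise_events])
    show "disjoint_family_on I UNIV" by (auto simp: disjoint_family_on_def I_def split: bool.split)
  qed
  have "sigma_sets (space M) (noise_events (i, Suc n)) = noise_events (i, Suc n)"
    unfolding noise_events_def by (rule sigma_sets_sigma_sets_eq) auto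
  have "(\<lambda>b. sigma_sets (space M) (\<Union>p\<in>I b. noise_events p))
      = case_bool (sigma_sets (space M) (\<Union>p\<in>{1..} \<times> {1..n}. noise_events p)) (noise_events (i, Suc n))"
  proof
    fix b show "sigma_sets (space M) (\<Union>p\<in>I b. noise_events p)
        = case_bool (sigma_sets (space M) (\<Union>p\<in>{1..} \<times> {1..n}. noise_events p)) (noise_events (i, Suc n)) b"
      using \<open>sigma_sets (space M) (noise_events (i, Suc n)) = noise_events (i, Suc n)\<close>
      by (cases b) (simp_all add: I_def)
  qed
  then show ?thesis using collected unfolding indep_set_def by (simp only:)
qed

lemma past_generators_subset_join:
  assumes N: "N \<ge> 1"
  shows "past_generators N ({1..} \<times> {1..n})
    \<subseteq> {a \<inter> b | a b. a \<in> initial_events N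
         \<and> b \<in> sigma_sets (space M) (\<Union>p\<in>{1..} \<times> {1..n}. noise_events p)}"
proof
  fix S assume "S \<in> past_generators N ({1..} \<times> {1..n})"
  then consider
      (init) i and B :: "(real^'d) set" where "i \<in> {1..N}" "B \<in> sets borel" "S = X0 N i -` B \<inter> space M"
    | (noise) p and B :: "(real^'m) set" where "p \<in> {1..} \<times> {1..n}" "B \<in> sets borel"
        "S = eps (fst p) (snd p) -` B \<inter> space M"
    unfolding past_generators_def by blast
  then show "S \<in> {a \<inter> b | a b. a \<in> initial_events N
      \<and> b \<in> sigma_sets (space M) (\<Union>p\<in>{1..} \<times> {1..n}. noise_events p)}"
  proof cases
    case init
    have "S \<in> initial_events N" unfolding initial_events_def init(3)
      by (rule vimage_in_vimage_algebra[where h="\<lambda>v. v i"]) (use init in \<open>auto simp: space_PiM\<close>)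
    moreover have "space M \<in> sigma_sets (space M) (\<Union>p\<in>{1..} \<times> {1..n}. noise_events p)"
      by (rule sigma_sets_top)
    ultimately show ?thesis using init(3) by blast
  next
    case noise
    have "S \<in> noise_events p" unfolding noise_events_def noise(3) using noise by auto
    then have "S \<in> sigma_sets (space M) (\<Union>p\<in>{1..} \<times> {1..n}. noise_events p)"
      using noise(1) by auto
    moreover have "space M \<in> initial_events N"
      unfolding initial_events_def by (rule sets.top[of "vimage_algebra _ _ _", simplified])
    ultimately show ?thesis using noise(3) by blast
  qed
qed

lemma past_indep_next_noise:
  assumes N: "N \<ge> 1" and i: "i \<ge> 1"
  shows "indep_set (sets (past_algebra N ({1..} \<times> {1..n}))) (noise_events (i, Suc n))"
proof -
  let ?T0 = "sigma_sets (space M) (\<Union>p\<in>{1..} \<times> {1..n}. noise_events p)"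
  have "(\<Union>p\<in>{1..} \<times> {1..n}. noise_events p) \<subseteq> all_noise_events"
    using noise_events_subset by force
  then have "?T0 \<subseteq> all_noise_events"
    by (rule sigma_algebra.sigma_sets_subset[OF sigma_algebra_all_noise_events])
  moreover have "noise_events (i, Suc n) \<subseteq> all_noise_events"
    using i by (intro noise_events_subset) auto
  moreover have "(\<Union>p\<in>{1..} \<times> {1..n}. noise_events p) \<subseteq> Pow (space M)"
    unfolding noise_events_def by (auto dest: sigma_sets_into_sp[rotated])
  then have "sigma_algebra (space M) ?T0" by (rule sigma_algebra_sigma_sets)
  ultimately have join: "indep_set
      (sigma_sets (space M) {a \<inter> b | a b. a \<in> initial_events N \<and> b \<in> ?T0})
      (sigma_sets (space M) (noise_events (i, Suc n)))"
    by (intro indep_set_join[OF indep_init[OF N, folded initial_events_def all_noise_events_def]]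
        sigma_algebra_initial_events sigma_algebra_all_noise_events
        past_noise_indep_next_noise[OF i] sigma_algebra_Int_stable[OF sigma_algebra_noise_events])
  show ?thesis
  proof (rule indep_set_mono[OF join])
    show "sets (past_algebra N ({1..} \<times> {1..n}))
        \<subseteq> sigma_sets (space M) {a \<inter> b | a b. a \<in> initial_events N \<and> b \<in> ?T0}"
      unfolding sets_past_algebra by (rule sigma_sets_mono'[OF past_generators_subset_join[OF N]])
    show "noise_events (i, Suc n) \<subseteq> sigma_sets (space M) (noise_events (i, Suc n))"
      by (rule sigma_sets_superset_generator)
  qed
qed

lemma nn_integral_past_times_noise:
  fixes u :: "'a \<Rightarrow> ennreal" and g :: "real^'m \<Rightarrow> ennreal"
  assumes N: "N \<ge> 1" and i: "i \<ge> 1"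
    and u: "u \<in> borel_measurable (past_algebra N ({1..} \<times> {1..n}))" and g: "g \<in> borel_measurable borel"
  shows "(\<integral>\<^sup>+\<omega>. u \<omega> * g (eps i (Suc n) \<omega>) \<partial>M)
       = (\<integral>\<^sup>+\<omega>. u \<omega> \<partial>M) * (\<integral>\<^sup>+\<omega>. g (eps i (Suc n) \<omega>) \<partial>M)"
proof (rule nn_integral_indep_factor[OF past_indep_next_noise[OF N i]])
  show "sigma_algebra (space M) (sets (past_algebra N ({1..} \<times> {1..n})))"
    using sets.sigma_algebra_axioms[of "past_algebra N ({1..} \<times> {1..n})"] by simp
  show "sigma_algebra (space M) (noise_events (i, Suc n))" by (rule sigma_algebra_noise_events)
  show "u \<in> borel_measurable M" by (rule measurable_from_past_algebra[OF _ u]) auto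
  show "(\<lambda>\<omega>. g (eps i (Suc n) \<omega>)) \<in> borel_measurable M"
    using measurable_compose[OF eps_meas[OF i] g] by simp
next
  fix S :: "ennreal set" assume S: "S \<in> sets borel"
  show "u -` S \<inter> space M \<in> sets (past_algebra N ({1..} \<times> {1..n}))"
    using measurable_sets[OF u S] by simp
  have "(\<lambda>\<omega>. g (eps i (Suc n) \<omega>)) -` S \<inter> space M = eps i (Suc n) -` (g -` S \<inter> space borel) \<inter> space M"
    by auto
  moreover have "g -` S \<inter> space borel \<in> sets borel" by (rule measurable_sets[OF g S])
  ultimately show "(\<lambda>\<omega>. g (eps i (Suc n) \<omega>)) -` S \<inter> space M \<in> noise_events (i, Suc n)"
    unfolding noise_events_def by auto
qed

lemma nn_integral_affine_past_times_noise:
  fixes e :: "nat \<Rightarrow> 'a \<Rightarrow> real" and g :: "real^'m \<Rightarrow> ennreal" and \<theta> :: "(real^'m) measure"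
  assumes law: "distr M borel (eps i (Suc n)) = \<theta>" and N: "N \<ge> 1" and i: "i \<in> {1..N}"
    and e: "\<And>j \<omega>. e j \<omega> \<ge> 0" "\<And>j. j \<in> {1..N} \<Longrightarrow> e j \<in> borel_measurable (past_algebra N ({1..} \<times> {1..n}))"
      "\<And>j. j \<in> {1..N} \<Longrightarrow> (\<integral>\<^sup>+\<omega>. ennreal (e j \<omega>) \<partial>M) \<le> ennreal B"
    and coeffs: "c \<ge> 0" "d \<ge> 0" "K \<ge> 0" "B \<ge> 0"
    and g: "g \<in> borel_measurable borel" "(\<integral>\<^sup>+z. g z \<partial>\<theta>) \<le> ennreal C"
  shows "(\<integral>\<^sup>+\<omega>. ennreal (c * e i \<omega> + (\<Sum>j\<in>{1..N}. d * e j \<omega>) + K) * g (eps i (Suc n) \<omega>) \<partial>M)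
    \<le> ennreal ((c + real N * d) * B + K) * ennreal C"
proof -
  have i1: "i \<ge> 1" using i by simp
  have noise_meas: "eps i (Suc n) \<in> borel_measurable M" using eps_meas[OF i1] by simp
  have "(\<lambda>\<omega>. ennreal (c * e i \<omega> + (\<Sum>j\<in>{1..N}. d * e j \<omega>) + K))
      \<in> borel_measurable (past_algebra N ({1..} \<times> {1..n}))"
    using e(2) i
    by (intro measurable_compose[OF _ measurable_ennreal] borel_measurable_add borel_measurable_times
        borel_measurable_const borel_measurable_sum) auto
  then have "(\<integral>\<^sup>+\<omega>. ennreal (c * e i \<omega> + (\<Sum>j\<in>{1..N}. d * e j \<omega>) + K) * g (eps i (Suc n) \<omega>) \<partial>M)
      = (\<integral>\<^sup>+\<omega>. ennreal (c * e i \<omega> + (\<Sum>j\<in>{1..N}. d * e j \<omega>) + K) \<partial>M)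
        * (\<integral>\<^sup>+\<omega>. g (eps i (Suc n) \<omega>) \<partial>M)"
    by (rule nn_integral_past_times_noise[OF N i1 _ g(1)])
  also have "\<dots> \<le> ennreal ((c + real N * d) * B + K) * ennreal C"
  proof (rule mult_mono)
    show "(\<integral>\<^sup>+\<omega>. ennreal (c * e i \<omega> + (\<Sum>j\<in>{1..N}. d * e j \<omega>) + K) \<partial>M)
        \<le> ennreal ((c + real N * d) * B + K)"
    proof -
      have e_meas: "e j \<in> borel_measurable M" if "j \<in> {1..N}" for j
        by (rule measurable_from_past_algebra[OF _ e(2)[OF that]]) auto
      have "(\<integral>\<^sup>+\<omega>. ennreal (c * e i \<omega> + (\<Sum>j\<in>{1..N}. d * e j \<omega>) + K) \<partial>M)
          \<le> ennreal (c * B + real (card {1..N}) * d * B + K)"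
        by (rule nn_integral_affine_le) (use coeffs e e_meas i in auto)
      also have "c * B + real (card {1..N}) * d * B + K = (c + real N * d) * B + K"
        by (simp add: algebra_simps)
      finally show ?thesis .
    qed
    have "(\<integral>\<^sup>+\<omega>. g (eps i (Suc n) \<omega>) \<partial>M) = (\<integral>\<^sup>+z. g z \<partial>\<theta>)"
      unfolding law[symmetric] by (rule nn_integral_distr[OF noise_meas, symmetric]) (simp add: g(1))
    then show "(\<integral>\<^sup>+\<omega>. g (eps i (Suc n) \<omega>) \<partial>M) \<le> ennreal C" using g(2) by simp
  qed auto
  finally show ?thesis .
qed

lemma exp_moment_step:
  fixes \<theta> :: "(real^'m) measure"
  assumes law: "distr M borel (eps i (Suc n)) = \<theta>"
    and A: "onorm (\<lambda>x. A *v x) \<le> \<kappa>" and L: "L \<ge> 0" and Dl: "AE z in \<theta>. Dlip f z \<le> ennreal L"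
    and \<delta>: "\<delta> \<ge> 0" and \<beta>: "\<beta> \<ge> 0" and \<rho>: "\<rho> = \<kappa> + 2 * \<delta> * L" "\<rho> > 0"
    and Y: "\<And>t. exp (\<rho> * t) \<le> \<eta> * exp t + K" and \<eta>: "\<eta> \<ge> 0" and K: "K \<ge> 0" and B: "B \<ge> 0"
    and C: "(\<integral>\<^sup>+ z. ennreal (exp (\<beta> * \<delta> * D1 f z)) \<partial>\<theta>) \<le> ennreal C"
    and N: "N \<ge> 1" and i: "i \<in> {1..N}"
    and IH: "\<And>j. j \<in> {1..N} \<Longrightarrow>
      (\<integral>\<^sup>+\<omega>. ennreal (exp (\<beta> * norm (particle A \<delta> f X0 eps N n j \<omega>))) \<partial>M) \<le> ennreal B"
  shows "(\<integral>\<^sup>+\<omega>. ennreal (exp (\<beta> * norm (particle A \<delta> f X0 eps N (Suc n) i \<omega>))) \<partial>M)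
    \<le> ennreal (\<eta> * B + K) * ennreal C"
proof -
  define e where "e j \<omega> = exp (\<beta> * norm (particle A \<delta> f X0 eps N n j \<omega>))" for j \<omega>
  define c where "c = \<eta> * ((\<kappa> + \<delta> * L) / \<rho>)"
  define d where "d = \<eta> * (\<delta> * L / \<rho>) / real N"
  define h where "h z = ennreal (exp (\<beta> * \<delta> * D1 f z))" for z
  have "0 \<le> \<kappa>" using A onorm_pos_le[OF matrix_vector_mul_bounded_linear, of A] by simp
  then have cd: "c \<ge> 0" "d \<ge> 0" unfolding c_def d_def using \<eta> \<delta> L \<rho>(2) by auto
  have "c + real N * d = \<eta> * ((\<kappa> + \<delta> * L + \<delta> * L) / \<rho>)"
    using N unfolding c_def d_def by (simp add: add_divide_distrib distrib_left)
  also have "\<kappa> + \<delta> * L + \<delta> * L = \<rho>" using \<rho>(1) by simp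
  also have "\<eta> * (\<rho> / \<rho>) = \<eta>" using \<rho>(2) by simp
  finally have weights: "c + real N * d = \<eta>" .
  have e_past: "e j \<in> borel_measurable (past_algebra N ({1..} \<times> {1..n}))" if "j \<in> {1..N}" for j
    using particle_measurable_past[OF N order_refl that] unfolding e_def by measurable
  have "eps i (Suc n) \<in> borel_measurable M" using eps_meas i by simp
  then have "AE \<omega> in M. Dlip f (eps i (Suc n) \<omega>) \<le> ennreal L"
    using Dl unfolding law[symmetric] by (rule AE_distrD)
  then have "AE \<omega> in M. ennreal (exp (\<beta> * norm (particle A \<delta> f X0 eps N (Suc n) i \<omega>)))
      \<le> ennreal (c * e i \<omega> + (\<Sum>j\<in>{1..N}. d * e j \<omega>) + K) * h (eps i (Suc n) \<omega>)"
  proof eventually_elim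
    case (elim \<omega>)
    have "exp (\<beta> * norm (particle A \<delta> f X0 eps N (Suc n) i \<omega>))
        \<le> (\<eta> * ((\<kappa> + \<delta> * L) / \<rho> * e i \<omega> + \<delta> * L / \<rho> * ((\<Sum>j\<in>{1..N}. e j \<omega>) / real N)) + K)
          * exp (\<beta> * \<delta> * D1 f (eps i (Suc n) \<omega>))"
      unfolding e_def
      by (rule particle_exp_step[where ?X0.0=X0 and eps=eps and i=i and n=n and \<omega>=\<omega>,
            OF A \<delta> L N elim \<beta> \<rho> Y])
    also have "\<eta> * ((\<kappa> + \<delta> * L) / \<rho> * e i \<omega> + \<delta> * L / \<rho> * ((\<Sum>j\<in>{1..N}. e j \<omega>) / real N)) + K
        = c * e i \<omega> + (\<Sum>j\<in>{1..N}. d * e j \<omega>) + K"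
      unfolding c_def d_def by (simp add: algebra_simps sum_distrib_left sum_divide_distrib)
    finally have le: "exp (\<beta> * norm (particle A \<delta> f X0 eps N (Suc n) i \<omega>))
        \<le> (c * e i \<omega> + (\<Sum>j\<in>{1..N}. d * e j \<omega>) + K) * exp (\<beta> * \<delta> * D1 f (eps i (Suc n) \<omega>))" .
    have "0 \<le> c * e i \<omega> + (\<Sum>j\<in>{1..N}. d * e j \<omega>) + K"
      using cd K unfolding e_def by (intro add_nonneg_nonneg mult_nonneg_nonneg sum_nonneg) auto
    from ennreal_leI[OF le] ennreal_mult[OF this exp_ge_zero] show ?case
      unfolding h_def by simp
  qed
  then have "(\<integral>\<^sup>+\<omega>. ennreal (exp (\<beta> * norm (particle A \<delta> f X0 eps N (Suc n) i \<omega>))) \<partial>M)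
      \<le> (\<integral>\<^sup>+\<omega>. ennreal (c * e i \<omega> + (\<Sum>j\<in>{1..N}. d * e j \<omega>) + K) * h (eps i (Suc n) \<omega>) \<partial>M)"
    by (rule nn_integral_mono_AE)
  also have "\<dots> \<le> ennreal ((c + real N * d) * B + K) * ennreal C"
    by (rule nn_integral_affine_past_times_noise[OF law N i _ e_past IH[folded e_def] cd K B])
      (use C D1_measurable in \<open>auto simp: e_def h_def\<close>)
  finally show ?thesis unfolding weights .
qed

lemma exp_moment_uniform_bound:
  fixes \<theta> :: "(real^'m) measure"
  assumes law: "\<And>i n. i \<ge> 1 \<Longrightarrow> n \<ge> 1 \<Longrightarrow> distr M borel (eps i n) = \<theta>"
    and A: "onorm (\<lambda>x. A *v x) \<le> \<kappa>" "\<kappa> > 0" and L: "L \<ge> 0"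
    and Dl: "AE z in \<theta>. Dlip f z \<le> ennreal L"
    and \<delta>: "\<delta> \<ge> 0" and contraction: "\<kappa> + 2 * \<delta> * L < 1" and \<beta>: "\<beta> \<ge> 0"
    and C: "(\<integral>\<^sup>+ z. ennreal (exp (\<beta> * \<delta> * D1 f z)) \<partial>\<theta>) \<le> ennreal C" "C > 0"
    and init: "\<And>N j. N \<ge> 1 \<Longrightarrow> j \<in> {1..N} \<Longrightarrow>
      (\<integral>\<^sup>+\<omega>. ennreal (exp (\<beta> * norm (X0 N j \<omega>))) \<partial>M) \<le> ennreal B0"
  shows "\<exists>B. \<forall>N\<ge>1. \<forall>n. \<forall>j\<in>{1..N}.
    (\<integral>\<^sup>+\<omega>. ennreal (exp (\<beta> * norm (particle A \<delta> f X0 eps N n j \<omega>))) \<partial>M) \<le> ennreal B"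
proof -
  define \<rho> where "\<rho> = \<kappa> + 2 * \<delta> * L"
  define K where "K = exp (\<rho> * (ln (2 * C) / (1 - \<rho>)))"
  define B where "B = max B0 (2 * C * K)"
  have \<rho>: "0 < \<rho>" "\<rho> < 1"
    unfolding \<rho>_def using A(2) mult_nonneg_nonneg[OF \<delta> L] contraction by auto
  have Y: "exp (\<rho> * t) \<le> 1 / (2 * C) * exp t + K" for t
    using exp_absorb[of "2 * C" \<rho> t] C(2) \<rho> unfolding K_def by simp
  have K0: "K \<ge> 0" unfolding K_def by simp
  then have "0 \<le> 2 * C * K" using C(2) by simp
  then have B0: "B \<ge> 0" unfolding B_def by (simp add: le_max_iff_disj)
  have "(\<integral>\<^sup>+\<omega>. ennreal (exp (\<beta> * norm (particle A \<delta> f X0 eps N n j \<omega>))) \<partial>M) \<le> ennreal B"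
    if N: "N \<ge> 1" and j: "j \<in> {1..N}" for N n j
    using j
  proof (induction n arbitrary: j)
    case 0
    have "ennreal B0 \<le> ennreal B" unfolding B_def by (simp add: ennreal_leI)
    then show ?case using order_trans[OF init[OF N 0]] by simp
  next
    case (Suc n)
    have "(\<integral>\<^sup>+\<omega>. ennreal (exp (\<beta> * norm (particle A \<delta> f X0 eps N (Suc n) j \<omega>))) \<partial>M)
        \<le> ennreal (1 / (2 * C) * B + K) * ennreal C"
      using Suc.prems C(2)
      by (intro exp_moment_step[OF law A(1) L Dl \<delta> \<beta> \<rho>_def \<rho>(1) Y _ K0 B0 C(1) N _ Suc.IH]) auto
    also have "\<dots> = ennreal (B / 2 + K * C)"
      using C(2) K0 B0 by (simp add: ennreal_mult[symmetric] field_simps)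
    also have "\<dots> \<le> ennreal B"
    proof (intro ennreal_leI)
      have "2 * C * K \<le> B" unfolding B_def by simp
      then show "B / 2 + K * C \<le> B" by (simp add: field_simps)
    qed
    finally show ?case .
  qed
  then show ?thesis by blast
qed

end

lemma nn_integral_exp_norm_le_law:
  fixes X :: "'a \<Rightarrow> real^'d"
  assumes X: "X \<in> borel_measurable M" and law: "distr M borel X = \<mu>"
    and int: "integrable \<mu> (\<lambda>x. exp (\<alpha> * norm x))" and \<beta>: "\<beta> \<le> \<alpha>"
  shows "(\<integral>\<^sup>+\<omega>. ennreal (exp (\<beta> * norm (X \<omega>))) \<partial>M) \<le> ennreal (\<integral>x. exp (\<alpha> * norm x) \<partial>\<mu>)"
proof -
  have "(\<integral>\<^sup>+\<omega>. ennreal (exp (\<beta> * norm (X \<omega>))) \<partial>M) = (\<integral>\<^sup>+x. ennreal (exp (\<beta> * norm x)) \<partial>\<mu>)"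
    unfolding law[symmetric] by (rule nn_integral_distr[OF X, symmetric]) simp
  also have "\<dots> \<le> (\<integral>\<^sup>+x. ennreal (exp (\<alpha> * norm x)) \<partial>\<mu>)"
    using \<beta> by (intro nn_integral_mono ennreal_leI) (simp add: mult_right_mono)
  also have "\<dots> = ennreal (\<integral>x. exp (\<alpha> * norm x) \<partial>\<mu>)"
    by (rule nn_integral_eq_integral[OF int]) simp
  finally show ?thesis .
qed

lemma nn_integral_exp_le_of_integral_le:
  fixes g :: "'z \<Rightarrow> real"
  assumes g: "\<And>z. g z \<ge> 0" "g \<in> borel_measurable \<theta>"
    and int: "integrable \<theta> (\<lambda>z. exp (\<alpha> * g z))" and t: "t \<le> \<alpha>"
    and bound: "(\<integral>z. exp (t * g z) \<partial>\<theta>) \<le> c"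
  shows "(\<integral>\<^sup>+z. ennreal (exp (t * g z)) \<partial>\<theta>) \<le> ennreal c"
proof -
  have "integrable \<theta> (\<lambda>z. exp (t * g z))"
  proof (rule Bochner_Integration.integrable_bound[OF int])
    show "(\<lambda>z. exp (t * g z)) \<in> borel_measurable \<theta>" using g(2) by measurable
    show "AE z in \<theta>. norm (exp (t * g z)) \<le> norm (exp (\<alpha> * g z))"
      using t g(1) by (intro AE_I2) (simp add: mult_right_mono)
  qed
  then have "(\<integral>\<^sup>+z. ennreal (exp (t * g z)) \<partial>\<theta>) = ennreal (\<integral>z. exp (t * g z) \<partial>\<theta>)"
    by (rule nn_integral_eq_integral) simp
  then show ?thesis using bound by (simp add: ennreal_leI)
qed

lemma delta_small:
  fixes \<delta> \<omega> Mc :: real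
  assumes "Mc > 1" "0 \<le> \<delta>" "\<delta> < (1 - exp (-\<omega>)) / (2 * Mc)"
  shows "exp (-\<omega>) + 2 * \<delta> * Mc < 1" and "\<delta> \<le> 1"
proof -
  show contraction: "exp (-\<omega>) + 2 * \<delta> * Mc < 1" using assms by (simp add: field_simps)
  have "\<delta> \<le> \<delta> * Mc" using assms(1,2) by (simp add: mult_le_cancel_left1)
  then show "\<delta> \<le> 1" using contraction exp_gt_zero[of "-\<omega>"] by linarith
qed

lemma SUP_SUP_less_top:
  fixes F :: "nat \<Rightarrow> nat \<Rightarrow> ennreal"
  assumes "\<And>N n. N \<ge> 1 \<Longrightarrow> F N n \<le> ennreal B"
  shows "(SUP n. SUP N\<in>{1..}. F N n) < \<infinity>"
proof -
  have "(SUP n. SUP N\<in>{1..}. F N n) \<le> ennreal B" using assms by (intro SUP_least) auto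
  then show ?thesis using ennreal_less_top[of B] unfolding infinity_ennreal_def by (rule le_less_trans)
qed

text \<open>Lemma 4.6.\<close>
theorem lemma4p6:
  fixes M :: "'a measure"
    and A :: "real^'d^'d" and \<delta> \<omega> Mc \<alpha> \<alpha>0 c2 \<gamma>0 :: real
    and \<theta> :: "(real^'m) measure" and \<mu>0 :: "(real^'d) measure"
    and f :: "real^'d \<Rightarrow> (real^'d) measure \<Rightarrow> real^'m \<Rightarrow> real^'d"
    and X0 :: "nat \<Rightarrow> nat \<Rightarrow> 'a \<Rightarrow> real^'d"
    and eps :: "nat \<Rightarrow> nat \<Rightarrow> 'a \<Rightarrow> real^'m"
  assumes M: "prob_space M"
    and theta: "prob_space \<theta>" "sets \<theta> = sets borel"
    and mu0: "\<mu>0 \<in> P1"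
    and f_meas: "(\<lambda>(x, \<mu>, z). f x \<mu> z) \<in>
        measurable (borel \<Otimes>\<^sub>M (restrict_space (subprob_algebra borel) P1 \<Otimes>\<^sub>M borel)) borel"
    and X0_meas: "\<And>N i. N \<ge> 1 \<Longrightarrow> i \<in> {1..N} \<Longrightarrow> X0 N i \<in> borel_measurable M"
    and X0_law: "\<And>N i. N \<ge> 1 \<Longrightarrow> i \<in> {1..N} \<Longrightarrow> distr M borel (X0 N i) = \<mu>0"
    and X0_exch: "\<And>N \<pi>. N \<ge> 1 \<Longrightarrow> \<pi> permutes {1..N} \<Longrightarrow>
        distr M (PiM {1..N} (\<lambda>_. borel)) (\<lambda>\<omega>. \<lambda>i\<in>{1..N}. X0 N (\<pi> i) \<omega>)
      = distr M (PiM {1..N} (\<lambda>_. borel)) (\<lambda>\<omega>. \<lambda>i\<in>{1..N}. X0 N i \<omega>)"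
    and eps_meas: "\<And>i n. i \<ge> 1 \<Longrightarrow> n \<ge> 1 \<Longrightarrow> eps i n \<in> borel_measurable M"
    and eps_law: "\<And>i n. i \<ge> 1 \<Longrightarrow> n \<ge> 1 \<Longrightarrow> distr M borel (eps i n) = \<theta>"
    and eps_indep: "prob_space.indep_vars M (\<lambda>_. borel) (\<lambda>(i, n). eps i n) ({1..} \<times> {1..})"
    and indep_init: "\<And>N. N \<ge> 1 \<Longrightarrow> prob_space.indep_set M
        (sets (vimage_algebra (space M) (\<lambda>\<omega>. \<lambda>i\<in>{1..N}. X0 N i \<omega>) (PiM {1..N} (\<lambda>_. borel))))
        (sets (vimage_algebra (space M) (\<lambda>\<omega>. \<lambda>p\<in>{1..} \<times> {1..}. eps (fst p) (snd p) \<omega>)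
                (PiM ({1..} \<times> {1..}) (\<lambda>_. borel))))"
    \<comment> \<open>(A3)\<close>
    and A3: "\<omega> > 0" "onorm (\<lambda>x. A *v x) \<le> exp (-\<omega>)"
    \<comment> \<open>(A6)\<close>
    and A6i: "Mc > 1" "AE z in \<theta>. Dlip f z \<le> ennreal Mc"
    and A6ii: "\<alpha> > 0" "integrable \<mu>0 (\<lambda>x. exp (\<alpha> * norm x))"
              "integrable \<theta> (\<lambda>z. exp (\<alpha> * D1 f z))"
    and alpha0: "0 < \<alpha>0" "\<alpha>0 \<le> \<alpha>"
    and c2: "0 < c2"
    and c2_bound: "\<And>\<alpha>1. \<alpha>1 \<in> {0..\<alpha>0} \<Longrightarrow> (\<integral>z. exp (\<alpha>1 * D1 f z) \<partial>\<theta>) \<le> exp (c2 * \<alpha>1)"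
    and gamma0: "0 < \<gamma>0" "ereal \<gamma>0 < a0 \<omega> f \<theta>"
    and delta: "0 \<le> \<delta>" "ereal \<delta> < a0 \<omega> f \<theta> - ereal \<gamma>0"
               "\<delta> < (1 - exp (-\<omega>)) / (2 * Mc)"
  shows "\<forall>\<alpha>1\<in>{0..\<alpha>0}.
     (SUP n. SUP N\<in>{1..}. \<integral>\<^sup>+ \<omega>'. ennreal (exp (\<alpha>1 * norm (particle A \<delta> f X0 eps N n 1 \<omega>'))) \<partial>M) < \<infinity>"
proof
  interpret independent_particle_system M A \<delta> f X0 eps
    by (rule independent_particle_system.intro[OF particle_system.intro[OF M f_meas X0_meas eps_meas]
          independent_particle_system_axioms.intro[OF eps_indep indep_init]])
  fix \<beta> assume \<beta>: "\<beta> \<in> {0..\<alpha>0}"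
  note contraction = delta_small(1)[OF A6i(1) delta(1,3)]
  have \<beta>\<delta>: "\<beta> * \<delta> \<in> {0..\<alpha>0}"
    using \<beta> delta(1) mult_left_le[OF delta_small(2)[OF A6i(1) delta(1,3)], of \<beta>] by auto
  have "(\<lambda>z. D1 f z) \<in> borel_measurable \<theta>"
    using D1_measurable by (simp add: measurable_cong_sets[OF theta(2) refl])
  then have noise: "(\<integral>\<^sup>+z. ennreal (exp (\<beta> * \<delta> * D1 f z)) \<partial>\<theta>) \<le> ennreal (exp (c2 * (\<beta> * \<delta>)))"
    by (intro nn_integral_exp_le_of_integral_le[OF _ _ A6ii(3) _ c2_bound[OF \<beta>\<delta>]])
      (use alpha0(2) \<beta>\<delta> in \<open>auto simp: D1_def\<close>)
  have init: "(\<integral>\<^sup>+\<omega>. ennreal (exp (\<beta> * norm (X0 N j \<omega>))) \<partial>M) \<le> ennreal (\<integral>x. exp (\<alpha> * norm x) \<partial>\<mu>0)"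
    if "N \<ge> 1" "j \<in> {1..N}" for N j
    by (rule nn_integral_exp_norm_le_law[OF X0_meas[OF that] X0_law[OF that] A6ii(2)])
      (use \<beta> alpha0(2) in auto)
  obtain B where "\<forall>N\<ge>1. \<forall>n. \<forall>j\<in>{1..N}.
      (\<integral>\<^sup>+\<omega>. ennreal (exp (\<beta> * norm (particle A \<delta> f X0 eps N n j \<omega>))) \<partial>M) \<le> ennreal B"
    using exp_moment_uniform_bound[OF eps_law A3(2) exp_gt_zero _ A6i(2) delta(1) contraction _
        noise exp_gt_zero init] A6i(1) \<beta> by auto
  then show "(SUP n. SUP N\<in>{1..}. \<integral>\<^sup>+ \<omega>'. ennreal (exp (\<beta> * norm (particle A \<delta> f X0 eps N n 1 \<omega>'))) \<partial>M)
      < \<infinity>"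
    by (intro SUP_SUP_less_top[where B = B]) simp
qed

end
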